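(* Let $n\ge1$, $a\ge0$, $A=|\psi\rangle\langle\psi|$ for an $n$-qubit pure state $|\psi\rangle$, and let $U$ be a $(2,a,0)$-block-encoding of $A$. Then, using $O(1)$ queries to $U$ (and its controlled version and inverse), one can implement a unitary that is a $(1,a+3,0)$-block-encoding of $I-2A$.
   Context: For an $n$-qubit operator $A$, a unitary $U$ on $n+a$ qubits is an $(\alpha,a,\varepsilon)$-block-encoding of $A$ if $\|\alpha(I_n\otimes\langle0|^{\otimes a})U(I_n\otimes|0\rangle^{\otimes a})-A\|\le\varepsilon$ (operator norm). *)

theory Defs
  imports Complex_Main "Jordan_Normal_Form.Matrix"
begin

(* Qubit conventions: a matrix on k qubits has dimension 2^k x 2^k; in a tensor
   product A (x) B the first factor carries the more significant index bits.
   System qubits come first, ancilla qubits last, as in I_n (x) <0|^{(x) a}. *)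

definition kron :: "complex mat \<Rightarrow> complex mat \<Rightarrow> complex mat" where
  "kron A B = mat (dim_row A * dim_row B) (dim_col A * dim_col B)
     (\<lambda>(i,j). A $$ (i div dim_row B, j div dim_col B) * B $$ (i mod dim_row B, j mod dim_col B))"

definition cadj :: "complex mat \<Rightarrow> complex mat" where
  "cadj M = mat (dim_col M) (dim_row M) (\<lambda>(i,j). cnj (M $$ (j,i)))"

definition unitary_mat :: "nat \<Rightarrow> complex mat \<Rightarrow> bool" where
  "unitary_mat d U \<longleftrightarrow> U \<in> carrier_mat d d \<and> U * cadj U = 1\<^sub>m d \<and> cadj U * U = 1\<^sub>m d"

definition cvec_norm :: "complex vec \<Rightarrow> real" where
  "cvec_norm v = sqrt (\<Sum>i<dim_vec v. (cmod (v $ i))\<^sup>2)"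

definition op_norm :: "complex mat \<Rightarrow> real" where
  "op_norm M = Sup {cvec_norm (M *\<^sub>v v) | v. v \<in> carrier_vec (dim_col M) \<and> cvec_norm v \<le> 1}"

(* (I_n (x) <0|^{(x) a}) U (I_n (x) |0>^{(x) a}) for U on n+a qubits *)
definition top_block :: "nat \<Rightarrow> nat \<Rightarrow> complex mat \<Rightarrow> complex mat" where
  "top_block n a U = mat (2^n) (2^n) (\<lambda>(i,j). U $$ (i * 2^a, j * 2^a))"

definition block_encoding :: "real \<Rightarrow> nat \<Rightarrow> real \<Rightarrow> nat \<Rightarrow> complex mat \<Rightarrow> complex mat \<Rightarrow> bool" where
  "block_encoding \<alpha> a \<epsilon> n U A \<longleftrightarrow>
     unitary_mat (2^(n+a)) U \<and> A \<in> carrier_mat (2^n) (2^n) \<and>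
     op_norm (complex_of_real \<alpha> \<cdot>\<^sub>m top_block n a U - A) \<le> \<epsilon>"

definition proj :: "complex vec \<Rightarrow> complex mat" where
  "proj psi = mat (dim_vec psi) (dim_vec psi) (\<lambda>(i,j). psi $ i * cnj (psi $ j))"

definition ctrl :: "complex mat \<Rightarrow> complex mat" where
  "ctrl U = kron (mat 2 2 (\<lambda>(i,j). if i = 0 \<and> j = 0 then 1 else 0)) (1\<^sub>m (dim_row U))
          + kron (mat 2 2 (\<lambda>(i,j). if i = 1 \<and> j = 1 then 1 else 0)) U"

(* Query gates to U (on n+a qubits) inside a register of n+a+3 qubits. *)
datatype query = QU | QUinv | QcU | QcUinv

fun query_mat :: "query \<Rightarrow> complex mat \<Rightarrow> complex mat" where
  "query_mat QU U = kron U (1\<^sub>m 8)"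
| "query_mat QUinv U = kron (cadj U) (1\<^sub>m 8)"
| "query_mat QcU U = kron (ctrl U) (1\<^sub>m 4)"
| "query_mat QcUinv U = kron (ctrl (cadj U)) (1\<^sub>m 4)"

(* circuit  V_k Q_k ... V_1 Q_1 V_0 : fixed gates V_i, queries Q_i *)
fun run_circuit :: "complex mat \<Rightarrow> (query \<times> complex mat) list \<Rightarrow> complex mat \<Rightarrow> complex mat" where
  "run_circuit V0 [] U = V0"
| "run_circuit V0 ((q, V) # qs) U = run_circuit (V * query_mat q U * V0) qs U"

end

theory Submission
  imports Defs "HOL-Analysis.L2_Norm"
begin

text \<open>
  Let \<open>P\<close> project onto the ancilla state \<open>|0\<rangle>\<close>, \<open>R = 2P - I\<close> and \<open>C = U\<^sup>\<dagger> R U\<close>.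
  Exact block encoding of \<open>A/2\<close> means \<open>PUP = Q/2\<close> with \<open>Q = |\<psi>\<rangle>\<langle>\<psi>| \<otimes> |0\<rangle>\<langle>0|\<close>,
  hence \<open>X := PCP = Q/2 - P\<close>. Since \<open>C\<close> and \<open>R\<close> are reflections, the alternating
  product satisfies \<open>P (CR)\<^sup>3 P = T\<^sub>3(X) = 4X\<^sup>3 - 3X\<close>, and because \<open>X\<close> has
  eigenvalue \<open>-1/2\<close> on \<open>Q\<close> and \<open>-1\<close> on \<open>P - Q\<close>, where \<open>T\<^sub>3\<close> takes the values \<open>1\<close>
  and \<open>-1\<close>, this equals \<open>2Q - P\<close>. So \<open>-(CR)\<^sup>3\<close>, built from three queries
  to \<open>U\<close> and three to \<open>U\<^sup>\<dagger>\<close>, block-encodes \<open>I - 2A\<close> with factor \<open>1\<close>; the three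
  extra ancilla qubits are idle.
\<close>

lemma cadj_carrier [simp]: "M \<in> carrier_mat r c \<Longrightarrow> cadj M \<in> carrier_mat c r"
  by (simp add: cadj_def)

lemma cadj_dims [simp]: "dim_row (cadj M) = dim_col M" "dim_col (cadj M) = dim_row M"
  by (simp_all add: cadj_def)

lemma cadj_index [simp]:
  "i < dim_col M \<Longrightarrow> j < dim_row M \<Longrightarrow> cadj M $$ (i, j) = cnj (M $$ (j, i))"
  by (simp add: cadj_def)

lemma cadj_cadj [simp]: "cadj (cadj M) = M"
  by (rule eq_matI) auto

lemma cadj_mult:
  assumes "A \<in> carrier_mat r k" "B \<in> carrier_mat k c"
  shows "cadj (A * B) = cadj B * cadj A"
  by (rule eq_matI) (use assms in \<open>auto simp: scalar_prod_def intro!: sum.cong\<close>)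

text \<open>
  Ring laws of \<open>complex mat\<close> with the carrier conditions replaced by dimension
  equations, so that the simplifier can normalise products of square matrices.
\<close>

lemma assoc_mult_mat_dim:
  "dim_col A = dim_row B \<Longrightarrow> dim_col B = dim_row C \<Longrightarrow> A * B * C = A * (B * C)"
  by (rule assoc_mult_mat[of A "dim_row A" "dim_col A" B "dim_col B" C "dim_col C"]) auto

lemma mult_add_distrib_mat_dim:
  "dim_col A = dim_row B \<Longrightarrow> dim_row C = dim_row B \<Longrightarrow> dim_col C = dim_col B \<Longrightarrow>
    A * (B + C) = A * B + A * C"
  by (rule mult_add_distrib_mat[of A "dim_row A" "dim_col A" B "dim_col B"]) auto

lemma add_mult_distrib_mat_dim:
  "dim_col A = dim_row C \<Longrightarrow> dim_row A = dim_row B \<Longrightarrow> dim_col A = dim_col B \<Longrightarrow>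
    (A + B) * C = A * C + B * C"
  by (rule add_mult_distrib_mat[of A "dim_row A" "dim_col A" B C "dim_col C"]) auto

lemma mult_minus_distrib_mat_dim:
  "dim_col (A :: complex mat) = dim_row B \<Longrightarrow> dim_row C = dim_row B \<Longrightarrow>
    dim_col C = dim_col B \<Longrightarrow> A * (B - C) = A * B - A * C"
  by (rule mult_minus_distrib_mat[of A "dim_row A" "dim_col A" B "dim_col B"]) auto

lemma minus_mult_distrib_mat_dim:
  "dim_col (A :: complex mat) = dim_row C \<Longrightarrow> dim_row A = dim_row B \<Longrightarrow>
    dim_col A = dim_col B \<Longrightarrow> (A - B) * C = A * C - B * C"
  by (rule minus_mult_distrib_mat[of A "dim_row A" "dim_col A" B C "dim_col C"]) auto

lemma mult_smult_distrib_dim: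
  "dim_col (A :: complex mat) = dim_row B \<Longrightarrow> A * (c \<cdot>\<^sub>m B) = c \<cdot>\<^sub>m (A * B)"
  by (rule mult_smult_distrib[of A "dim_row A" "dim_col A" B "dim_col B"]) auto

lemma mult_smult_assoc_mat_dim:
  "dim_col (A :: complex mat) = dim_row B \<Longrightarrow> (c \<cdot>\<^sub>m A) * B = c \<cdot>\<^sub>m (A * B)"
  by (rule mult_smult_assoc_mat[of A "dim_row A" "dim_col A" B "dim_col B"]) auto

lemmas mat_normalise_dim = assoc_mult_mat_dim mult_add_distrib_mat_dim add_mult_distrib_mat_dim
  mult_minus_distrib_mat_dim minus_mult_distrib_mat_dim mult_smult_distrib_dim
  mult_smult_assoc_mat_dim left_mult_one_mat' right_mult_one_mat'

lemma unitary_mat_carrier: "unitary_mat d U \<Longrightarrow> U \<in> carrier_mat d d"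
  by (simp add: unitary_mat_def)

lemma unitary_mat_cadj: "unitary_mat d U \<Longrightarrow> unitary_mat d (cadj U)"
  by (auto simp: unitary_mat_def)

lemma unitary_mat_mult:
  assumes A: "unitary_mat d A" and B: "unitary_mat d B"
  shows "unitary_mat d (A * B)"
proof -
  have Ac: "A \<in> carrier_mat d d" and Bc: "B \<in> carrier_mat d d"
    using A B by (simp_all add: unitary_mat_def)
  have adj: "cadj (A * B) = cadj B * cadj A" by (rule cadj_mult[OF Ac Bc])
  have "A * B * (cadj B * cadj A) = A * (B * cadj B) * cadj A"
    using Ac Bc by (simp add: assoc_mult_mat_dim)
  also have "\<dots> = 1\<^sub>m d" using A B Ac by (simp add: unitary_mat_def)
  finally have right: "A * B * cadj (A * B) = 1\<^sub>m d" by (simp add: adj)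
  have "cadj B * cadj A * (A * B) = cadj B * (cadj A * A) * B"
    using Ac Bc by (simp add: assoc_mult_mat_dim)
  also have "\<dots> = 1\<^sub>m d" using A B Bc by (simp add: unitary_mat_def)
  finally have left: "cadj (A * B) * (A * B) = 1\<^sub>m d" by (simp add: adj)
  show ?thesis using left right Ac Bc by (simp add: unitary_mat_def)
qed

lemma unitary_mat_diag:
  assumes "\<And>i. i < d \<Longrightarrow> f i * cnj (f i) = 1"
  shows "unitary_mat d (mat_diag d f)"
proof -
  have adj: "cadj (mat_diag d f) = mat_diag d (\<lambda>i. cnj (f i))"
    by (rule eq_matI) (auto simp: mat_diag_def)
  have "mat_diag d (\<lambda>i. f i * cnj (f i)) = 1\<^sub>m d" "mat_diag d (\<lambda>i. cnj (f i) * f i) = 1\<^sub>m d"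
    by (rule eq_matI; auto simp: mat_diag_def assms mult.commute[of "cnj _"])+
  thus ?thesis unfolding unitary_mat_def adj mat_diag_diag by simp
qed

lemma idem_mult_left:
  fixes A Z :: "complex mat"
  assumes "A * A = A" "A \<in> carrier_mat N N" "dim_row Z = N"
  shows "A * (A * Z) = A * Z"
  using assms by (simp flip: assoc_mult_mat_dim)

lemma involution_mult_left:
  fixes A B Z :: "complex mat"
  assumes "A * B = 1\<^sub>m N" "A \<in> carrier_mat N N" "B \<in> carrier_mat N N" "dim_row Z = N"
  shows "A * (B * Z) = Z"
  using assms by (simp flip: assoc_mult_mat_dim add: left_mult_one_mat')

lemma unitary_conj_involution:
  fixes U R :: "complex mat"
  assumes U: "unitary_mat N U" and R: "R \<in> carrier_mat N N" and RR: "R * R = 1\<^sub>m N"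
  shows "cadj U * R * U * (cadj U * R * U) = 1\<^sub>m N"
proof -
  have Uc: "U \<in> carrier_mat N N" and UU: "U * cadj U = 1\<^sub>m N" and UU': "cadj U * U = 1\<^sub>m N"
    using U by (simp_all add: unitary_mat_def)
  note UU'' = involution_mult_left[OF UU Uc cadj_carrier[OF Uc]]
    and RR' = involution_mult_left[OF RR R R]
  show ?thesis using Uc R by (simp add: assoc_mult_mat_dim UU'' RR' UU')
qed

lemma alternating_reflections_chebyshev:
  fixes P C R :: "complex mat"
  assumes P: "P \<in> carrier_mat N N" and C: "C \<in> carrier_mat N N"
    and PP: "P * P = P" and CC: "C * C = 1\<^sub>m N" and R: "R = 2 \<cdot>\<^sub>m P - 1\<^sub>m N"
  shows "P * (C * R * C * R * C * R) * P
    = 4 \<cdot>\<^sub>m (P * C * P * (P * C * P) * (P * C * P)) - 3 \<cdot>\<^sub>m (P * C * P)"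
proof -
  have [simp]: "dim_row P = N" "dim_col P = N" "dim_row C = N" "dim_col C = N"
    using P C by auto
  note PP' = idem_mult_left[OF PP P] and CC' = involution_mult_left[OF CC C C]
  \<comment> \<open>Both sides normalise to combinations of the same products, which the entrywise
    check then treats as atoms.\<close>
  show ?thesis
    unfolding R by (simp add: mat_normalise_dim PP PP' CC CC')
      (rule eq_matI; simp add: algebra_simps del: index_mult_mat(1))
qed

lemma chebyshev3_shifted_projection:
  fixes P Q :: "complex mat"
  assumes P: "P \<in> carrier_mat N N" and Q: "Q \<in> carrier_mat N N"
    and PP: "P * P = P" and PQ: "P * Q = Q" and QP: "Q * P = Q" and QQ: "Q * Q = Q"
    and X: "X = (1/2) \<cdot>\<^sub>m Q - P"
  shows "4 \<cdot>\<^sub>m (X * X * X) - 3 \<cdot>\<^sub>m X = 2 \<cdot>\<^sub>m Q - P"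
proof -
  have [simp]: "dim_row P = N" "dim_col P = N" "dim_row Q = N" "dim_col Q = N"
    using P Q by auto
  note PP' = idem_mult_left[OF PP P] and QQ' = idem_mult_left[OF QQ Q]
  have PQ': "P * (Q * Z) = Q * Z" and QP': "Q * (P * Z) = Q * Z" if "dim_row Z = N" for Z
    using that by (simp_all flip: assoc_mult_mat_dim add: PQ QP)
  show ?thesis
    unfolding X by (simp add: mat_normalise_dim PP PP' PQ PQ' QP QP' QQ QQ')
      (rule eq_matI; simp add: algebra_simps del: index_mult_mat(1))
qed

lemma compressed_conjugated_reflection:
  fixes P Q U R :: "complex mat"
  assumes P: "P \<in> carrier_mat N N" and U: "U \<in> carrier_mat N N" and Q: "Q \<in> carrier_mat N N"
    and PP: "P * P = P" and QQ: "Q * Q = Q" and UU: "cadj U * U = 1\<^sub>m N"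
    and PUP: "P * (U * P) = (1/2) \<cdot>\<^sub>m Q" and PUP': "P * (cadj U * P) = (1/2) \<cdot>\<^sub>m Q"
    and R: "R = 2 \<cdot>\<^sub>m P - 1\<^sub>m N"
  shows "P * (cadj U * R * U) * P = (1/2) \<cdot>\<^sub>m Q - P"
proof -
  have [simp]: "dim_row P = N" "dim_col P = N" "dim_row U = N" "dim_col U = N"
    "dim_row Q = N" "dim_col Q = N"
    using P U Q by auto
  note UU' = involution_mult_left[OF UU cadj_carrier[OF U] U]
  have "P * (cadj U * (P * (U * P))) = P * (cadj U * P) * (P * (U * P))"
    by (simp add: assoc_mult_mat_dim idem_mult_left[OF PP P])
  also have "\<dots> = (1/2) \<cdot>\<^sub>m Q * ((1/2) \<cdot>\<^sub>m Q)"
    by (simp only: PUP PUP')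
  also have "\<dots> = (1/4) \<cdot>\<^sub>m Q"
    by (simp add: mat_normalise_dim QQ) (rule eq_matI; simp)
  finally have split: "P * (cadj U * (P * (U * P))) = (1/4) \<cdot>\<^sub>m Q" .
  show ?thesis
    unfolding R by (simp add: mat_normalise_dim UU' PP split) (rule eq_matI; simp)
qed

lemma kron_dims [simp]:
  "dim_row (kron A B) = dim_row A * dim_row B" "dim_col (kron A B) = dim_col A * dim_col B"
  by (simp_all add: kron_def)

lemma kron_one_index:
  assumes "M \<in> carrier_mat N N" "0 < m" "i < N * m" "j < N * m"
  shows "kron M (1\<^sub>m m) $$ (i, j) = (if i mod m = j mod m then M $$ (i div m, j div m) else 0)"
  using assms by (auto simp: kron_def)

lemma sum_block_mod_select:
  fixes f :: "nat \<Rightarrow> 'a :: comm_monoid_add"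
  assumes "r < m"
  shows "(\<Sum>k\<in>{l*m..<l*m+m}. if k mod m = r then f (k div m) else 0) = f l"
proof -
  have "(\<Sum>k\<in>{l*m..<l*m+m}. if k mod m = r then f (k div m) else 0)
      = (\<Sum>k\<in>{l*m..<l*m+m}. if k = l*m + r then f l else 0)"
  proof (rule sum.cong)
    fix k assume "k \<in> {l*m..<l*m+m}"
    then obtain t where t: "k = l*m + t" "t < m"
      by (metis add_less_cancel_left atLeastLessThan_iff le_Suc_ex)
    then show "(if k mod m = r then f (k div m) else 0) = (if k = l*m + r then f l else 0)"
      by auto
  qed simp
  also have "\<dots> = f l" using assms by (simp add: sum.delta)
  finally show ?thesis .
qed

lemma kron_one_mult:
  assumes A: "A \<in> carrier_mat N N" and B: "B \<in> carrier_mat N N" and m: "0 < m"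
  shows "kron A (1\<^sub>m m) * kron B (1\<^sub>m m) = kron (A * B) (1\<^sub>m m)"
proof (rule eq_matI)
  fix i j assume "i < dim_row (kron (A * B) (1\<^sub>m m))" "j < dim_col (kron (A * B) (1\<^sub>m m))"
  hence i: "i < N * m" and j: "j < N * m" using A B by auto
  have idm: "i div m < N" "j div m < N" using i j m by (auto simp: less_mult_imp_div_less)
  let ?g = "\<lambda>l. if i mod m = j mod m then A $$ (i div m, l) * B $$ (l, j div m) else 0"
  have "(kron A (1\<^sub>m m) * kron B (1\<^sub>m m)) $$ (i, j)
      = (\<Sum>k<N*m. kron A (1\<^sub>m m) $$ (i, k) * kron B (1\<^sub>m m) $$ (k, j))"
    using i j A B by (simp add: scalar_prod_def lessThan_atLeast0)
  also have "\<dots> = (\<Sum>k<N*m. if k mod m = i mod m then ?g (k div m) else 0)"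
    by (rule sum.cong) (use i j A B m in \<open>auto simp: kron_one_index\<close>)
  also have "\<dots> = (\<Sum>l<N. \<Sum>k\<in>{l*m..<l*m+m}. if k mod m = i mod m then ?g (k div m) else 0)"
    by (rule sum.nat_group[symmetric])
  also have "\<dots> = (\<Sum>l<N. ?g l)"
    using m by (simp only: sum_block_mod_select[where f = ?g] mod_less_divisor)
  also have "\<dots> = kron (A * B) (1\<^sub>m m) $$ (i, j)"
    using i j A B m idm
    by (auto simp: kron_one_index[OF mult_carrier_mat[OF A B] m i j] scalar_prod_def lessThan_atLeast0)
  finally show "(kron A (1\<^sub>m m) * kron B (1\<^sub>m m)) $$ (i, j) = kron (A * B) (1\<^sub>m m) $$ (i, j)" .
qed (use A B in auto)

lemma cadj_kron_one:
  assumes M: "M \<in> carrier_mat N N" and m: "0 < m"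
  shows "cadj (kron M (1\<^sub>m m)) = kron (cadj M) (1\<^sub>m m)"
proof (rule eq_matI)
  fix i j assume "i < dim_row (kron (cadj M) (1\<^sub>m m))" "j < dim_col (kron (cadj M) (1\<^sub>m m))"
  hence i: "i < N * m" and j: "j < N * m" using M by auto
  have "i div m < N" "j div m < N" using i j m by (auto simp: less_mult_imp_div_less)
  then show "cadj (kron M (1\<^sub>m m)) $$ (i, j) = kron (cadj M) (1\<^sub>m m) $$ (i, j)"
    using kron_one_index[OF M m j i] kron_one_index[OF cadj_carrier[OF M] m i j] i j M by auto
qed (use M in auto)

lemma kron_one_one:
  assumes m: "0 < m"
  shows "kron (1\<^sub>m N) (1\<^sub>m m) = 1\<^sub>m (N * m)"
proof (rule eq_matI)
  fix i j assume "i < dim_row (1\<^sub>m (N * m))" "j < dim_col (1\<^sub>m (N * m))"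
  hence i: "i < N * m" and j: "j < N * m" by auto
  have "i div m < N" "j div m < N" using i j m by (auto simp: less_mult_imp_div_less)
  moreover have "(i mod m = j mod m \<and> i div m = j div m) \<longleftrightarrow> i = j"
    by (metis div_mult_mod_eq)
  ultimately show "kron (1\<^sub>m N) (1\<^sub>m m) $$ (i, j) = 1\<^sub>m (N * m) $$ (i, j)"
    using kron_one_index[OF one_carrier_mat m i j] i j by auto
qed auto

lemma unitary_mat_kron_one:
  assumes U: "unitary_mat N M" and m: "0 < m"
  shows "unitary_mat (N * m) (kron M (1\<^sub>m m))"
proof -
  have M: "M \<in> carrier_mat N N" and cM: "cadj M \<in> carrier_mat N N"
    using U by (simp_all add: unitary_mat_def)
  have "kron M (1\<^sub>m m) * kron (cadj M) (1\<^sub>m m) = 1\<^sub>m (N * m)"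
    "kron (cadj M) (1\<^sub>m m) * kron M (1\<^sub>m m) = 1\<^sub>m (N * m)"
    using U by (simp_all add: kron_one_mult[OF M cM m] kron_one_mult[OF cM M m]
        kron_one_one[OF m] unitary_mat_def)
  moreover have "kron M (1\<^sub>m m) \<in> carrier_mat (N * m) (N * m)" using M by auto
  ultimately show ?thesis by (simp add: unitary_mat_def cadj_kron_one[OF M m])
qed

lemma top_block_kron_one:
  assumes M: "M \<in> carrier_mat (2^(n+a)) (2^(n+a))"
  shows "top_block n (a+b) (kron M (1\<^sub>m (2^b))) = top_block n a M"
proof (rule eq_matI)
  fix i j assume "i < dim_row (top_block n a M)" "j < dim_col (top_block n a M)"
  hence i: "i < 2^n" and j: "j < 2^n" by (auto simp: top_block_def)
  have shift: "k * 2^(a+b) = k * 2^a * 2^b" for k :: nat by (simp add: power_add)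
  have lt: "k * 2^(a+b) < 2^(n+a) * 2^b" if "k < 2^n" for k :: nat
    using that by (simp add: shift power_add)
  have "kron M (1\<^sub>m (2^b)) $$ (i * 2^(a+b), j * 2^(a+b)) = M $$ (i * 2^a, j * 2^a)"
    by (simp add: kron_one_index[OF M _ lt[OF i] lt[OF j]]) (simp add: shift)
  then show "top_block n (a+b) (kron M (1\<^sub>m (2^b))) $$ (i, j) = top_block n a M $$ (i, j)"
    using i j by (simp add: top_block_def)
qed (auto simp: top_block_def)

lemma cvec_norm_L2: "cvec_norm v = L2_set (\<lambda>i. cmod (v $ i)) {..<dim_vec v}"
  by (simp add: cvec_norm_def L2_set_def)

lemma cvec_norm_component_le: "i < dim_vec v \<Longrightarrow> cmod (v $ i) \<le> cvec_norm v"
  unfolding cvec_norm_L2 by (rule member_le_L2_set) auto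

lemma cvec_norm_le_sum: "cvec_norm v \<le> (\<Sum>i<dim_vec v. cmod (v $ i))"
  unfolding cvec_norm_L2 by (rule L2_set_le_sum) auto

lemma op_norm_bdd_above:
  assumes M: "M \<in> carrier_mat r c"
  shows "bdd_above {cvec_norm (M *\<^sub>v v) | v. v \<in> carrier_vec (dim_col M) \<and> cvec_norm v \<le> 1}"
proof (rule bdd_aboveI)
  fix x assume "x \<in> {cvec_norm (M *\<^sub>v v) | v. v \<in> carrier_vec (dim_col M) \<and> cvec_norm v \<le> 1}"
  then obtain v where v: "v \<in> carrier_vec c" "cvec_norm v \<le> 1" and x: "x = cvec_norm (M *\<^sub>v v)"
    using M by auto
  have "cmod ((M *\<^sub>v v) $ i) \<le> (\<Sum>j<c. cmod (M $$ (i, j)))" if i: "i < r" for i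
  proof -
    have "cmod ((M *\<^sub>v v) $ i) = cmod (\<Sum>j<c. M $$ (i, j) * v $ j)"
      using i M v by (simp add: scalar_prod_def lessThan_atLeast0)
    also have "\<dots> \<le> (\<Sum>j<c. cmod (M $$ (i, j)) * cmod (v $ j))"
      by (rule order.trans[OF norm_sum]) (simp add: norm_mult)
    also have "\<dots> \<le> (\<Sum>j<c. cmod (M $$ (i, j)))"
      using cvec_norm_component_le[of _ v] v
      by (intro sum_mono mult_left_le) force+
    finally show ?thesis .
  qed
  then have "(\<Sum>i<r. cmod ((M *\<^sub>v v) $ i)) \<le> (\<Sum>i<r. \<Sum>j<c. cmod (M $$ (i, j)))"
    by (intro sum_mono) simp
  then show "x \<le> (\<Sum>i<r. \<Sum>j<c. cmod (M $$ (i, j)))"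
    using cvec_norm_le_sum[of "M *\<^sub>v v"] M unfolding x by simp
qed

lemma op_norm_nonpos_imp_zero:
  assumes M: "M \<in> carrier_mat r c" and le: "op_norm M \<le> 0"
  shows "M = 0\<^sub>m r c"
proof (rule eq_matI)
  fix i j assume "i < dim_row (0\<^sub>m r c :: complex mat)" "j < dim_col (0\<^sub>m r c :: complex mat)"
  hence i: "i < r" and j: "j < c" by auto
  have "(\<Sum>k<c. (cmod (unit_vec c j $ k))\<^sup>2) = (\<Sum>k<c. if k = j then 1 else 0)"
    by (rule sum.cong) (auto simp: unit_vec_def)
  hence "cvec_norm (unit_vec c j) \<le> 1" using j by (simp add: cvec_norm_def)
  hence "cvec_norm (M *\<^sub>v unit_vec c j) \<le> op_norm M"
    unfolding op_norm_def using M by (intro cSup_upper[OF _ op_norm_bdd_above[OF M]]) auto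
  moreover have "cmod (M $$ (i, j)) \<le> cvec_norm (M *\<^sub>v unit_vec c j)"
    using cvec_norm_component_le[of i "M *\<^sub>v unit_vec c j"] M i j by simp
  ultimately have "cmod (M $$ (i, j)) \<le> 0" using le by linarith
  then show "M $$ (i, j) = 0\<^sub>m r c $$ (i, j)" using i j by simp
qed (use M in auto)

lemma op_norm_zero: "op_norm (0\<^sub>m r c :: complex mat) = 0"
proof -
  have "{cvec_norm (0\<^sub>m r c *\<^sub>v v) | v. v \<in> carrier_vec (dim_col (0\<^sub>m r c :: complex mat))
          \<and> cvec_norm v \<le> 1} = {0}"
    by (auto simp: cvec_norm_def scalar_prod_def intro!: exI[of _ "0\<^sub>v c"])
  then show ?thesis by (simp add: op_norm_def)
qed

lemma smult_one_mat: "(1 :: complex) \<cdot>\<^sub>m M = M"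
  by (rule eq_matI) auto

lemma block_encoding_exact_iff:
  "block_encoding \<alpha> a 0 n U A \<longleftrightarrow>
     unitary_mat (2^(n+a)) U \<and> A \<in> carrier_mat (2^n) (2^n) \<and>
     complex_of_real \<alpha> \<cdot>\<^sub>m top_block n a U = A"
proof -
  have T: "complex_of_real \<alpha> \<cdot>\<^sub>m top_block n a U \<in> carrier_mat (2^n) (2^n)"
    by (simp add: top_block_def)
  have "op_norm (B - A) \<le> 0 \<longleftrightarrow> B = A"
    if B: "B \<in> carrier_mat (2^n) (2^n)" and A: "A \<in> carrier_mat (2^n) (2^n)" for A B :: "complex mat"
  proof
    assume "op_norm (B - A) \<le> 0"
    then have "B - A = 0\<^sub>m (2^n) (2^n)" using A B by (intro op_norm_nonpos_imp_zero) auto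
    then show "B = A"
      using A B by (intro eq_matI) (metis index_minus_mat(1) index_zero_mat(1) carrier_matD
          right_minus_eq, auto)
  qed (use A in \<open>simp add: op_norm_zero\<close>)
  then show ?thesis unfolding block_encoding_def using T by blast
qed

lemma proj_carrier [simp]: "proj v \<in> carrier_mat (dim_vec v) (dim_vec v)"
  by (simp add: proj_def)

lemma proj_cnj_index:
  "i < dim_vec v \<Longrightarrow> j < dim_vec v \<Longrightarrow> cnj (proj v $$ (j, i)) = proj v $$ (i, j)"
  by (simp add: proj_def mult.commute)

lemma proj_idem:
  assumes "cvec_norm v = 1"
  shows "proj v * proj v = proj v"
proof (rule eq_matI)
  fix i j assume "i < dim_row (proj v)" "j < dim_col (proj v)"
  hence i: "i < dim_vec v" and j: "j < dim_vec v" by (auto simp: proj_def)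
  have "(\<Sum>k<dim_vec v. (cmod (v $ k))\<^sup>2) = 1"
    using assms by (simp add: cvec_norm_def)
  moreover have "(\<Sum>k<dim_vec v. v $ k * cnj (v $ k)) = of_real (\<Sum>k<dim_vec v. (cmod (v $ k))\<^sup>2)"
    by (simp add: complex_norm_square[symmetric] del: of_real_power)
  ultimately have norm1: "(\<Sum>k<dim_vec v. v $ k * cnj (v $ k)) = 1" by simp
  have "(proj v * proj v) $$ (i, j) = (\<Sum>k<dim_vec v. v $ i * cnj (v $ k) * (v $ k * cnj (v $ j)))"
    using i j by (simp add: proj_def scalar_prod_def lessThan_atLeast0)
  also have "\<dots> = v $ i * cnj (v $ j) * (\<Sum>k<dim_vec v. v $ k * cnj (v $ k))"
    by (simp add: sum_distrib_left algebra_simps)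
  finally show "(proj v * proj v) $$ (i, j) = proj v $$ (i, j)"
    using i j norm1 by (simp add: proj_def)
qed (simp_all add: proj_def)

text \<open>
  In dimension \<open>m * d\<close> the index \<open>k\<close> stands for the basis state
  \<open>|k div d\<rangle> \<otimes> |k mod d\<rangle>\<close>, the system register first, as in \<^const>\<open>top_block\<close>.
\<close>

definition ancilla_zero_proj :: "nat \<Rightarrow> nat \<Rightarrow> complex mat" where
  "ancilla_zero_proj m d = mat_diag (m * d) (\<lambda>k. if k mod d = 0 then 1 else 0)"

definition ancilla_zero_refl :: "nat \<Rightarrow> nat \<Rightarrow> complex mat" where
  "ancilla_zero_refl m d = mat_diag (m * d) (\<lambda>k. if k mod d = 0 then 1 else -1)"

definition ancilla_embed :: "nat \<Rightarrow> complex vec \<Rightarrow> complex vec" where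
  "ancilla_embed d psi = vec (dim_vec psi * d) (\<lambda>k. if k mod d = 0 then psi $ (k div d) else 0)"

lemma ancilla_zero_proj_carrier [simp]: "ancilla_zero_proj m d \<in> carrier_mat (m * d) (m * d)"
  and ancilla_zero_proj_dims [simp]:
    "dim_row (ancilla_zero_proj m d) = m * d" "dim_col (ancilla_zero_proj m d) = m * d"
  by (simp_all add: ancilla_zero_proj_def mat_diag_def)

lemma ancilla_zero_proj_idem: "ancilla_zero_proj m d * ancilla_zero_proj m d = ancilla_zero_proj m d"
  unfolding ancilla_zero_proj_def mat_diag_diag by (rule arg_cong[where f = "mat_diag _"]) auto

lemma ancilla_zero_refl_carrier [simp]: "ancilla_zero_refl m d \<in> carrier_mat (m * d) (m * d)"
  by (simp add: ancilla_zero_refl_def)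

lemma ancilla_zero_refl_eq: "ancilla_zero_refl m d = 2 \<cdot>\<^sub>m ancilla_zero_proj m d - 1\<^sub>m (m * d)"
  by (rule eq_matI) (auto simp: ancilla_zero_refl_def ancilla_zero_proj_def mat_diag_def)

lemma ancilla_zero_refl_involution: "ancilla_zero_refl m d * ancilla_zero_refl m d = 1\<^sub>m (m * d)"
  unfolding ancilla_zero_refl_def mat_diag_diag by (rule eq_matI) (auto simp: mat_diag_def)

lemma unitary_ancilla_zero_refl: "unitary_mat (m * d) (ancilla_zero_refl m d)"
  unfolding ancilla_zero_refl_def by (rule unitary_mat_diag) simp

lemma ancilla_zero_proj_compress_index:
  assumes "M \<in> carrier_mat (m * d) (m * d)" "k < m * d" "l < m * d"
  shows "(ancilla_zero_proj m d * (M * ancilla_zero_proj m d)) $$ (k, l)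
    = (if k mod d = 0 \<and> l mod d = 0 then M $$ (k, l) else 0)"
  using assms by (simp add: ancilla_zero_proj_def mat_diag_mult_left[of _ "m * d" "m * d"]
      mat_diag_mult_right[of _ "m * d" "m * d"])

lemma ancilla_embed_dim [simp]: "dim_vec (ancilla_embed d psi) = dim_vec psi * d"
  by (simp add: ancilla_embed_def)

lemma ancilla_embed_index:
  "k < dim_vec psi * d \<Longrightarrow>
    ancilla_embed d psi $ k = (if k mod d = 0 then psi $ (k div d) else 0)"
  by (simp add: ancilla_embed_def)

lemma cvec_norm_ancilla_embed:
  assumes d: "0 < d"
  shows "cvec_norm (ancilla_embed d psi) = cvec_norm psi"
proof -
  let ?f = "\<lambda>l. (cmod (psi $ l))\<^sup>2"
  have "(\<Sum>k<dim_vec psi * d. (cmod (ancilla_embed d psi $ k))\<^sup>2)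
      = (\<Sum>k<dim_vec psi * d. if k mod d = 0 then ?f (k div d) else 0)"
    by (rule sum.cong) (auto simp: ancilla_embed_index)
  also have "\<dots> = (\<Sum>l<dim_vec psi. \<Sum>k\<in>{l*d..<l*d+d}. if k mod d = 0 then ?f (k div d) else 0)"
    by (rule sum.nat_group[symmetric])
  also have "\<dots> = (\<Sum>l<dim_vec psi. ?f l)"
    using d by (simp only: sum_block_mod_select[where f = ?f])
  finally show ?thesis by (simp add: cvec_norm_def)
qed

lemma ancilla_zero_proj_absorbs_embed:
  fixes d :: nat
  assumes psi: "psi \<in> carrier_vec m"
  defines "P \<equiv> ancilla_zero_proj m d" and "Q \<equiv> proj (ancilla_embed d psi)"
  shows "P * Q = Q" "Q * P = Q"
proof -
  have Q: "Q \<in> carrier_mat (m * d) (m * d)"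
    using psi proj_carrier[of "ancilla_embed d psi"] by (simp add: Q_def)
  show "P * Q = Q" "Q * P = Q"
    unfolding P_def ancilla_zero_proj_def mat_diag_mult_left[OF Q] mat_diag_mult_right[OF Q]
    by (rule eq_matI; use Q psi in \<open>auto simp: Q_def proj_def ancilla_embed_index\<close>)+
qed

lemma ancilla_zero_proj_compress_block:
  assumes d: "0 < d" and psi: "psi \<in> carrier_vec m" and M: "M \<in> carrier_mat (m * d) (m * d)"
    and top: "\<And>i j. i < m \<Longrightarrow> j < m \<Longrightarrow> M $$ (i * d, j * d) = (1/2) * proj psi $$ (i, j)"
  shows "ancilla_zero_proj m d * (M * ancilla_zero_proj m d) = (1/2) \<cdot>\<^sub>m proj (ancilla_embed d psi)"
proof (rule eq_matI)
  fix k l assume "k < dim_row ((1/2) \<cdot>\<^sub>m proj (ancilla_embed d psi))"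
    "l < dim_col ((1/2) \<cdot>\<^sub>m proj (ancilla_embed d psi))"
  hence k: "k < m * d" and l: "l < m * d" using psi by (auto simp: proj_def)
  have "k div d < m" "l div d < m" using k l by (simp_all add: less_mult_imp_div_less)
  then show "(ancilla_zero_proj m d * (M * ancilla_zero_proj m d)) $$ (k, l)
      = ((1/2) \<cdot>\<^sub>m proj (ancilla_embed d psi)) $$ (k, l)"
    using k l psi top[of "k div d" "l div d"]
    by (auto simp: ancilla_zero_proj_compress_index[OF M k l] proj_def ancilla_embed_index
        mult.commute elim!: dvdE dest!: mod_0_imp_dvd)
qed (use psi in \<open>auto simp: proj_def\<close>)

lemma reflection_walk_compression:
  assumes d: "0 < d" and psi: "psi \<in> carrier_vec m" and norm: "cvec_norm psi = 1"
    and U: "unitary_mat (m * d) U"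
    and top: "\<And>i j. i < m \<Longrightarrow> j < m \<Longrightarrow> U $$ (i * d, j * d) = (1/2) * proj psi $$ (i, j)"
  defines "P \<equiv> ancilla_zero_proj m d" and "R \<equiv> ancilla_zero_refl m d"
    and "C \<equiv> cadj U * ancilla_zero_refl m d * U"
  shows "P * (C * R * C * R * C * R) * P = 2 \<cdot>\<^sub>m proj (ancilla_embed d psi) - P"
proof -
  define N where "N = m * d"
  define Q where "Q = proj (ancilla_embed d psi)"
  have C: "C = cadj U * R * U" by (simp add: C_def R_def)
  have Uc: "U \<in> carrier_mat N N" using U by (simp add: unitary_mat_def N_def)
  have Pc: "P \<in> carrier_mat N N" and Rc: "R \<in> carrier_mat N N"
    by (simp_all add: P_def R_def N_def)
  have Qc: "Q \<in> carrier_mat N N"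
    using psi proj_carrier[of "ancilla_embed d psi"] by (simp add: Q_def N_def)
  have Cc: "C \<in> carrier_mat N N" unfolding C using Uc Rc by (intro mult_carrier_mat cadj_carrier)
  have PP: "P * P = P" by (simp add: P_def ancilla_zero_proj_idem)
  have QQ: "Q * Q = Q" unfolding Q_def
    by (rule proj_idem) (simp add: cvec_norm_ancilla_embed[OF d] norm)
  have R2: "R = 2 \<cdot>\<^sub>m P - 1\<^sub>m N" by (simp add: R_def P_def N_def ancilla_zero_refl_eq)
  have CC: "C * C = 1\<^sub>m N"
    unfolding C using U Rc
    by (intro unitary_conj_involution) (simp_all add: N_def R_def ancilla_zero_refl_involution)
  have top_adj: "cadj U $$ (i * d, j * d) = (1/2) * proj psi $$ (i, j)" if "i < m" "j < m" for i j
  proof -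
    have "i * d < N" "j * d < N" using that d by (simp_all add: N_def)
    then have "cadj U $$ (i * d, j * d) = cnj (U $$ (j * d, i * d))" using Uc by simp
    also have "\<dots> = cnj ((1/2) * proj psi $$ (j, i))" by (simp only: top[OF that(2,1)])
    also have "\<dots> = (1/2) * proj psi $$ (i, j)" using proj_cnj_index[of i psi j] that psi by simp
    finally show ?thesis .
  qed
  have PUP: "P * (U * P) = (1/2) \<cdot>\<^sub>m Q" and PUP': "P * (cadj U * P) = (1/2) \<cdot>\<^sub>m Q"
    unfolding P_def Q_def using Uc top top_adj
    by (intro ancilla_zero_proj_compress_block[OF d psi]; simp add: N_def)+
  have X: "P * C * P = (1/2) \<cdot>\<^sub>m Q - P"
    unfolding C using U
    by (intro compressed_conjugated_reflection[OF Pc Uc Qc PP QQ _ PUP PUP' R2])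
      (simp add: unitary_mat_def N_def)
  have "P * (C * R * C * R * C * R) * P
      = 4 \<cdot>\<^sub>m (P * C * P * (P * C * P) * (P * C * P)) - 3 \<cdot>\<^sub>m (P * C * P)"
    by (rule alternating_reflections_chebyshev[OF Pc Cc PP CC R2])
  also have "\<dots> = 2 \<cdot>\<^sub>m Q - P"
    using ancilla_zero_proj_absorbs_embed[OF psi, of d]
    by (intro chebyshev3_shifted_projection[OF Pc Qc PP _ _ QQ X]) (simp_all add: P_def Q_def)
  finally show ?thesis by (simp add: Q_def)
qed

lemma reflection_walk_top_entries:
  assumes d: "0 < d" and psi: "psi \<in> carrier_vec m" and norm: "cvec_norm psi = 1"
    and U: "unitary_mat (m * d) U"
    and top: "\<And>i j. i < m \<Longrightarrow> j < m \<Longrightarrow> U $$ (i * d, j * d) = (1/2) * proj psi $$ (i, j)"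
    and i: "i < m" and j: "j < m"
  defines "R \<equiv> ancilla_zero_refl m d" and "C \<equiv> cadj U * ancilla_zero_refl m d * U"
  shows "(mat_diag (m * d) (\<lambda>_. -1) * (C * R * C * R * C * R)) $$ (i * d, j * d)
    = (if i = j then 1 else 0) - 2 * proj psi $$ (i, j)"
proof -
  let ?P = "ancilla_zero_proj m d" and ?Q = "proj (ancilla_embed d psi)"
  have ij: "i * d < m * d" "j * d < m * d" using i j d by simp_all
  have Wc: "C * R * C * R * C * R \<in> carrier_mat (m * d) (m * d)"
    unfolding C_def R_def using U by (intro mult_carrier_mat cadj_carrier) (auto simp: unitary_mat_def)
  have "(mat_diag (m * d) (\<lambda>_. -1) * (C * R * C * R * C * R)) $$ (i * d, j * d)
      = - (C * R * C * R * C * R) $$ (i * d, j * d)"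
    using ij by (simp add: mat_diag_mult_left[OF Wc])
  also have "\<dots> = - (?P * (C * R * C * R * C * R) * ?P) $$ (i * d, j * d)"
    using ancilla_zero_proj_compress_index[OF Wc ij]
    by (simp add: assoc_mult_mat[OF ancilla_zero_proj_carrier Wc ancilla_zero_proj_carrier])
  also have "\<dots> = - (2 \<cdot>\<^sub>m ?Q - ?P) $$ (i * d, j * d)"
    using reflection_walk_compression[OF d psi norm U top] by (simp add: C_def R_def)
  finally show ?thesis
    using ij i j psi by (simp add: ancilla_embed_index proj_def ancilla_zero_proj_def mat_diag_def)
qed

definition reflection_walk_queries :: "complex mat \<Rightarrow> complex mat \<Rightarrow> (query \<times> complex mat) list" where
  "reflection_walk_queries R S = [(QU, R), (QUinv, R), (QU, R), (QUinv, R), (QU, R), (QUinv, S)]"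

lemma run_reflection_walk:
  assumes U: "U \<in> carrier_mat N N" and R: "R \<in> carrier_mat N N" and S: "S \<in> carrier_mat N N"
  defines "C \<equiv> cadj U * R * U"
  shows "run_circuit (kron R (1\<^sub>m 8)) (reflection_walk_queries (kron R (1\<^sub>m 8)) (kron S (1\<^sub>m 8))) U
    = kron (S * (C * R * C * R * C * R)) (1\<^sub>m 8)"
proof -
  have [simp]: "dim_row U = N" "dim_col U = N" "dim_row R = N" "dim_col R = N"
    "dim_row S = N" "dim_col S = N"
    using U R S by auto
  have lift: "kron A (1\<^sub>m 8) * kron B (1\<^sub>m 8) = kron (A * B) (1\<^sub>m 8)"
    if "dim_row A = N" "dim_col A = N" "dim_row B = N" "dim_col B = N" for A B
    by (rule kron_one_mult) (use that in \<open>auto intro: carrier_matI\<close>)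
  show ?thesis
    by (simp add: reflection_walk_queries_def lift C_def assoc_mult_mat_dim)
qed

lemma reflection_walk_block_encoding:
  assumes psi: "psi \<in> carrier_vec (2^n)" and norm: "cvec_norm psi = 1"
    and be: "block_encoding 2 a 0 n U (proj psi)"
  defines "R \<equiv> kron (ancilla_zero_refl (2^n) (2^a)) (1\<^sub>m 8)"
    and "S \<equiv> kron (mat_diag (2^n * 2^a) (\<lambda>_. -1)) (1\<^sub>m 8)"
  shows "block_encoding 1 (a+3) 0 n (run_circuit R (reflection_walk_queries R S) U)
    (1\<^sub>m (2^n) - 2 \<cdot>\<^sub>m proj psi)"
proof -
  define m d where "m = (2::nat)^n" and "d = (2::nat)^a"
  define R0 where "R0 = ancilla_zero_refl m d"
  define C where "C = cadj U * R0 * U"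
  define W where "W = mat_diag (m * d) (\<lambda>_. -1) * (C * R0 * C * R0 * C * R0)"
  have dims: "(2::nat)^(n+a) = m * d" "(2::nat)^(n+(a+3)) = m * d * 2^3"
    by (simp_all add: m_def d_def power_add)
  have U: "unitary_mat (m * d) U" and top_eq: "complex_of_real 2 \<cdot>\<^sub>m top_block n a U = proj psi"
    using be by (simp_all add: block_encoding_exact_iff dims)
  have top: "U $$ (i * d, j * d) = (1/2) * proj psi $$ (i, j)" if "i < m" "j < m" for i j
    using arg_cong[OF top_eq, of "\<lambda>M. M $$ (i, j)"] that
    by (simp add: top_block_def m_def d_def mult.commute)
  have run: "run_circuit R (reflection_walk_queries R S) U = kron W (1\<^sub>m (2^3))"
    using unitary_mat_carrier[OF U]
    unfolding R_def S_def W_def C_def R0_def m_def d_def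
    by (simp add: run_reflection_walk ancilla_zero_refl_def)
  have W_unitary: "unitary_mat (m * d) W"
    unfolding W_def C_def R0_def
    by (intro unitary_mat_mult unitary_mat_cadj unitary_mat_diag unitary_ancilla_zero_refl U) simp
  have "top_block n a W = 1\<^sub>m (2^n) - 2 \<cdot>\<^sub>m proj psi"
    using reflection_walk_top_entries[OF _ psi[folded m_def] norm U top] psi
    by (intro eq_matI) (auto simp: top_block_def W_def C_def R0_def m_def d_def proj_def)
  then have "top_block n (a+3) (kron W (1\<^sub>m (2^3))) = 1\<^sub>m (2^n) - 2 \<cdot>\<^sub>m proj psi"
    using top_block_kron_one[of W n a 3] W_unitary by (simp add: dims unitary_mat_carrier)
  moreover have "unitary_mat (2^(n+(a+3))) (kron W (1\<^sub>m (2^3)))"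
    unfolding dims by (rule unitary_mat_kron_one[OF W_unitary]) simp
  moreover have "1\<^sub>m (2^n) - 2 \<cdot>\<^sub>m proj psi \<in> carrier_mat (2^n) (2^n)"
    using psi by (auto simp: proj_def)
  ultimately show ?thesis
    unfolding block_encoding_exact_iff run by (simp add: smult_one_mat)
qed

theorem lemma5p8:
  shows "\<exists>K::nat. \<forall>n a. n \<ge> 1 \<longrightarrow>
    (\<exists>V0 qs. length qs \<le> K \<and>
       unitary_mat (2^(n+a+3)) V0 \<and> (\<forall>(q, V) \<in> set qs. unitary_mat (2^(n+a+3)) V) \<and>
       (\<forall>psi U. psi \<in> carrier_vec (2^n) \<and> cvec_norm psi = 1 \<and>
           block_encoding 2 a 0 n U (proj psi) \<longrightarrow>
           block_encoding 1 (a+3) 0 n (run_circuit V0 qs U) (1\<^sub>m (2^n) - 2 \<cdot>\<^sub>m proj psi)))"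
proof (intro exI[of _ 6] allI impI)
  fix n a :: nat
  define R where "R = kron (ancilla_zero_refl (2^n) (2^a)) (1\<^sub>m 8)"
  define S where "S = kron (mat_diag (2^n * 2^a) (\<lambda>_. -1 :: complex)) (1\<^sub>m 8)"
  have dim: "(2::nat)^(n+a+3) = 2^n * 2^a * 8" by (simp add: power_add)
  have "unitary_mat (2^(n+a+3)) R" "unitary_mat (2^(n+a+3)) S"
    unfolding R_def S_def dim
    by (intro unitary_mat_kron_one unitary_ancilla_zero_refl unitary_mat_diag; simp)+
  then have "length (reflection_walk_queries R S) \<le> 6"
    "\<forall>(q, V) \<in> set (reflection_walk_queries R S). unitary_mat (2^(n+a+3)) V"
    by (auto simp: reflection_walk_queries_def)
  moreover have "psi \<in> carrier_vec (2^n) \<and> cvec_norm psi = 1 \<and> block_encoding 2 a 0 n U (proj psi)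
      \<longrightarrow> block_encoding 1 (a+3) 0 n (run_circuit R (reflection_walk_queries R S) U)
            (1\<^sub>m (2^n) - 2 \<cdot>\<^sub>m proj psi)" for psi U
    using reflection_walk_block_encoding unfolding R_def S_def by blast
  ultimately show "\<exists>V0 qs. length qs \<le> 6 \<and>
       unitary_mat (2^(n+a+3)) V0 \<and> (\<forall>(q, V) \<in> set qs. unitary_mat (2^(n+a+3)) V) \<and>
       (\<forall>psi U. psi \<in> carrier_vec (2^n) \<and> cvec_norm psi = 1 \<and>
           block_encoding 2 a 0 n U (proj psi) \<longrightarrow>
           block_encoding 1 (a+3) 0 n (run_circuit V0 qs U) (1\<^sub>m (2^n) - 2 \<cdot>\<^sub>m proj psi))"
    using \<open>unitary_mat (2^(n+a+3)) R\<close> by blast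
qed

end
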